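(* Define, for a bond $b=(i,i+r)\in\mathcal B$, the atomistic contribution $$a_b(y)=\frac{|b\cap\Omega_a|}{r}\,\varphi\Big(\frac{r}{|b\cap\Omega_a|}\,D_{b\cap\Omega_a}y\Big)\ \text{ if } |b\cap\Omega_a|>0,\qquad a_b(y)=0\ \text{ otherwise},$$ and $E^{\rm acc}(y)=\sum_{b\in\mathcal B}a_b(y)+\sum_{b\in\mathcal B}c_b(y)$. Then for every $F>0$ and $v\in\mathcal U_0$, $(E^{\rm acc})'(Fx;v)=0$. More precisely, for every $b=(i,i+r)\in\mathcal B$ and every $v\in\mathcal U$, $a_b'(Fx;v)+c_b'(Fx;v)=e_b'(Fx;v)=\varphi'(rF)(v_{i+r}-v_i)$.
   Context: One-dimensional setting. Fix integers $N\ge 1$, $R\ge 1$. Let $\Omega=(-N-R,N+R)$, $\Omega_c=(0,N)$, $\Omega_a=\Omega\setminus[0,N]$, $\mathcal I=\Omega\cap\mathbb Z$, $\mathcal I_a=\Omega_a\cap\mathbb Z$, $\mathcal I_D=\{i\in\mathbb Z: N\le |i|<N+R\}$. Let $\mathcal U$ be the set of real-valued functions $y$ on $\mathcal I_a\cup[0,N]$ whose restriction to $(0,N)$ lies in $W^{1,\infty}(0,N)$ (identified with its continuous representative on $[0,N]$); write $y_i=y(i)$. Let $\mathcal U_0=\{u\in\mathcal U: u_i=0 \text{ for all } i\in\mathcal I_D\}$. For $F\in\mathbb R$, $Fx$ denotes the element $y\in\mathcal U$ with $y(x)=Fx$. Let $\varphi:\mathbb R\to\mathbb R$ be continuously differentiable.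 A bond $(i,i+r)$ ($i\in\mathbb Z$, $r\ge1$) is the open interval from $i$ to $i+r$; $\mathcal B=\{(i,i+r): 1\le r\le R,\ i\in\mathcal I,\ i+r\in\mathcal I\}$. Exact contribution of $b=(i,i+r)$: $e_b(y)=\varphi(y_{i+r}-y_i)$. Continuum contribution: $c_b(y)=\frac1r\int_{b\cap\Omega_c}\varphi(r\,y'(x))\,dx$. For a set $\omega=\bigcup_{m=1}^M(l_m,r_m)$ that is a finite union of pairwise disjoint open intervals with endpoints in the domain of $y$, $D_\omega y=\sum_{m=1}^M(y(r_m)-y(l_m))$ and $|\omega|$ is its total length (for $b\in\mathcal B$, $b\cap\Omega_a$ is such a set, with endpoints in $\mathcal I\cup\{0,N\}$). For a functional $G$ on $\mathcal U$, $G'(y;v)=\frac{d}{dt}G(y+tv)\big|_{t=0}$. *)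

theory Defs
  imports "HOL-Analysis.Analysis"
begin

text \<open>Deformations are real functions
  on the real line; only their values on the integer atoms of the atomistic region and on
  the continuum interval [0,N] are ever used.\<close>

definition Iset :: "nat \<Rightarrow> nat \<Rightarrow> int set" where
  "Iset N R = {i. - (int N + int R) < i \<and> i < int N + int R}"

definition ID :: "nat \<Rightarrow> nat \<Rightarrow> int set" where
  "ID N R = {i. int N \<le> \<bar>i\<bar> \<and> \<bar>i\<bar> < int N + int R}"

definition Omega_a :: "nat \<Rightarrow> nat \<Rightarrow> real set" where
  "Omega_a N R = {- (real N + real R)<..<real N + real R} - {0..real N}"

definition Omega_c :: "nat \<Rightarrow> real set" where
  "Omega_c N = {0<..<real N}"

text \<open>A bond (i, i+r) is encoded by the pair (i, r); as a set it is the open interval.\<close>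
definition bond :: "int \<Rightarrow> nat \<Rightarrow> real set" where
  "bond i r = {real_of_int i <..< real_of_int i + real r}"

definition bondset :: "nat \<Rightarrow> nat \<Rightarrow> (int \<times> nat) set" where
  "bondset N R = {(i, r). 1 \<le> r \<and> r \<le> R \<and> i \<in> Iset N R \<and> i + int r \<in> Iset N R}"

text \<open>Admissible deformations: restriction to (0,N) in W^{1,infinity}, i.e. (continuous
  representative) Lipschitz on [0,N].\<close>
definition U :: "nat \<Rightarrow> (real \<Rightarrow> real) set" where
  "U N = {y. \<exists>L. L-lipschitz_on {0..real N} y}"

definition U0 :: "nat \<Rightarrow> nat \<Rightarrow> (real \<Rightarrow> real) set" where
  "U0 N R = {u \<in> U N. \<forall>i \<in> ID N R. u (real_of_int i) = 0}"

text \<open>D_omega y for a finite union of disjoint open intervals: sum over connected components.\<close>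
definition Dw :: "real set \<Rightarrow> (real \<Rightarrow> real) \<Rightarrow> real" where
  "Dw \<omega> y = (\<Sum>c \<in> components \<omega>. y (Sup c) - y (Inf c))"

definition lenw :: "real set \<Rightarrow> real" where
  "lenw \<omega> = measure lborel \<omega>"

definition e_b :: "(real \<Rightarrow> real) \<Rightarrow> int \<Rightarrow> nat \<Rightarrow> (real \<Rightarrow> real) \<Rightarrow> real" where
  "e_b \<phi> i r y = \<phi> (y (real_of_int i + real r) - y (real_of_int i))"

definition c_b :: "(real \<Rightarrow> real) \<Rightarrow> nat \<Rightarrow> int \<Rightarrow> nat \<Rightarrow> (real \<Rightarrow> real) \<Rightarrow> real" where
  "c_b \<phi> N i r y = 1 / real r * integral (bond i r \<inter> Omega_c N) (\<lambda>x. \<phi> (real r * deriv y x))"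

definition a_b :: "(real \<Rightarrow> real) \<Rightarrow> nat \<Rightarrow> nat \<Rightarrow> int \<Rightarrow> nat \<Rightarrow> (real \<Rightarrow> real) \<Rightarrow> real" where
  "a_b \<phi> N R i r y =
     (let \<omega> = bond i r \<inter> Omega_a N R in
      if lenw \<omega> > 0 then lenw \<omega> / real r * \<phi> (real r / lenw \<omega> * Dw \<omega> y) else 0)"

definition E_acc :: "(real \<Rightarrow> real) \<Rightarrow> nat \<Rightarrow> nat \<Rightarrow> (real \<Rightarrow> real) \<Rightarrow> real" where
  "E_acc \<phi> N R y = (\<Sum>(i, r) \<in> bondset N R. a_b \<phi> N R i r y) + (\<Sum>(i, r) \<in> bondset N R. c_b \<phi> N i r y)"

definition has_gderiv :: "((real \<Rightarrow> real) \<Rightarrow> real) \<Rightarrow> (real \<Rightarrow> real) \<Rightarrow> (real \<Rightarrow> real) \<Rightarrow> real \<Rightarrow> bool" where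
  "has_gderiv G y v D \<longleftrightarrow> ((\<lambda>t. G (\<lambda>x. y x + t * v x)) has_real_derivative D) (at 0)"

end

theory Submission
  imports Defs
begin

(* At the homogeneous state y = F x every piece of a bond (i, i + r) sees the same strain: the
   atomistic part is evaluated at (r / |omega|) D_omega y = r F and the continuum part at r y' = r F.
   Hence the Gateaux derivative of each part is phi'(r F) times the increment of v over the
   corresponding pieces of the bond, and these increments add up to v(i + r) - v(i). For the
   continuum part this is the fundamental theorem of calculus for the Lipschitz function v, which
   rests on Lebesgue's theorem that Lipschitz functions are differentiable almost everywhere
   (Vitali covering applied to the Dini derivatives of a monotone function). Summed over all bonds
   the increments telescope, and the sum vanishes when v vanishes on the boundary atoms. *)

section \<open>Lipschitz functions are differentiable almost everywhere\<close>

lemma sum_increments_le: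
  fixes g :: "real \<Rightarrow> real"
  assumes "mono g" and "finite G" and "\<And>j. j \<in> G \<Longrightarrow> 0 < snd j"
    and "\<And>j. j \<in> G \<Longrightarrow> c \<le> fst j \<and> fst j + snd j \<le> d" and "c \<le> d"
    and "pairwise (\<lambda>i j. disjnt {fst i..fst i + snd i} {fst j..fst j + snd j}) G"
  shows "(\<Sum>j\<in>G. g (fst j + snd j) - g (fst j)) \<le> g d - g c"
  using assms(2-)
proof (induction "card G" arbitrary: G d)
  case 0
  then show ?case using \<open>mono g\<close> by (simp add: monoD)
next
  case (Suc n)
  then have "G \<noteq> {}" by auto
  obtain j0 where j0: "j0 \<in> G" "fst j0 = Max (fst ` G)"
  proof -
    have "Max (fst ` G) \<in> fst ` G" using Suc.prems(1) \<open>G \<noteq> {}\<close> by (intro Max_in) auto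
    then show thesis using that by (metis imageE)
  qed
  then have j0_max: "fst j \<le> fst j0" if "j \<in> G" for j
    using Suc.prems(1) that by simp
  define G' where "G' = G - {j0}"
  have below_j0: "fst j + snd j \<le> fst j0" if "j \<in> G'" for j
  proof -
    have j: "j \<in> G" "j \<noteq> j0" using that unfolding G'_def by auto
    then have "disjnt {fst j..fst j + snd j} {fst j0..fst j0 + snd j0}"
      using Suc.prems(5) j0(1) unfolding pairwise_def by blast
    then show ?thesis using j0_max[OF j(1)] Suc.prems(2)[OF j0(1)] unfolding disjnt_def
      by (smt (verit) atLeastAtMost_iff disjoint_iff)
  qed
  have "(\<Sum>j\<in>G'. g (fst j + snd j) - g (fst j)) \<le> g (fst j0) - g c"
  proof (rule Suc.hyps(1))
    show "n = card G'" using Suc.hyps(2) j0(1) Suc.prems(1) unfolding G'_def by simp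
    show "pairwise (\<lambda>i j. disjnt {fst i..fst i + snd i} {fst j..fst j + snd j}) G'"
      using Suc.prems(5) unfolding G'_def by (meson Diff_subset pairwise_subset)
    show "c \<le> fst j0" using Suc.prems(3)[OF j0(1)] by simp
  qed (use Suc.prems below_j0 in \<open>auto simp: G'_def\<close>)
  moreover have "g (fst j0 + snd j0) \<le> g d" using Suc.prems(3)[OF j0(1)] \<open>mono g\<close> by (simp add: monoD)
  moreover have "(\<Sum>j\<in>G. g (fst j + snd j) - g (fst j))
      = (g (fst j0 + snd j0) - g (fst j0)) + (\<Sum>j\<in>G'. g (fst j + snd j) - g (fst j))"
    unfolding G'_def using Suc.prems(1) j0(1) by (simp add: sum.remove)
  ultimately show ?case by simp
qed

lemma Vitali_covering_intervals:
  fixes K :: "(real \<times> real) set"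
  assumes "\<And>j. j \<in> K \<Longrightarrow> 0 < snd j"
    and "\<And>x d. x \<in> E \<Longrightarrow> 0 < d \<Longrightarrow> \<exists>j\<in>K. x \<in> {fst j..fst j + snd j} \<and> snd j < d"
  obtains C where "countable C" "C \<subseteq> K"
    "pairwise (\<lambda>i j. disjnt {fst i..fst i + snd i} {fst j..fst j + snd j}) C"
    "negligible (E - (\<Union>j\<in>C. {fst j..fst j + snd j}))"
proof -
  have ball: "cball (fst j + snd j / 2) (snd j / 2) = {fst j..fst j + snd j}" for j
    by (simp add: cball_eq_atLeastAtMost)
  have "\<exists>j. j \<in> K \<and> x \<in> cball (fst j + snd j / 2) (snd j / 2) \<and> snd j / 2 < d"
    if "x \<in> E" "0 < d" for x d
    using assms(2)[OF that] unfolding ball by fastforce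
  from Vitali_covering_theorem_cballs[of K "\<lambda>j. snd j / 2" E "\<lambda>j. fst j + snd j / 2", OF _ this]
  show thesis using assms(1) that unfolding ball by auto
qed

lemma measure_disjoint_Union_le:
  fixes A :: "'i \<Rightarrow> 'a::euclidean_space set"
  assumes "countable C" and "\<And>j. j \<in> C \<Longrightarrow> A j \<in> lmeasurable"
    and "pairwise (\<lambda>i j. disjnt (A i) (A j)) C"
    and "(\<Union>j\<in>C. A j) \<subseteq> V" and "V \<in> lmeasurable"
    and "\<And>G. finite G \<Longrightarrow> G \<subseteq> C \<Longrightarrow> (\<Sum>j\<in>G. measure lebesgue (A j)) \<le> B"
  shows "(\<Union>j\<in>C. A j) \<in> lmeasurable" and "measure lebesgue (\<Union>j\<in>C. A j) \<le> B"
proof -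
  show W: "(\<Union>j\<in>C. A j) \<in> lmeasurable"
    using assms(1,2,4,5) by (intro fmeasurableI2[OF assms(5,4)] sets.countable_UN'') auto
  show "measure lebesgue (\<Union>j\<in>C. A j) \<le> B"
  proof (rule field_le_epsilon)
    fix e :: real assume "0 < e"
    obtain D where D: "D \<subseteq> A ` C" "finite D"
      "measure lebesgue (\<Union>(A ` C)) - e < measure lebesgue (\<Union>D)"
    proof (rule measure_countable_Union_approachable[of "A ` C" e "measure lebesgue (\<Union>j\<in>C. A j)"])
      show "measure lebesgue (\<Union>D) \<le> measure lebesgue (\<Union>j\<in>C. A j)" if "D \<subseteq> A ` C" "finite D" for D
        using that assms(2) by (intro measure_mono_fmeasurable[OF _ _ W]) (auto intro!: sets.finite_Union)
    qed (use assms(1,2) \<open>0 < e\<close> in auto)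
    obtain G where G: "G \<subseteq> C" "finite G" "D = A ` G" using D by (meson finite_subset_image)
    have "measure lebesgue (\<Union>D) = (\<Sum>j\<in>G. measure lebesgue (A j))"
      unfolding G(3)
    proof (rule measure_negligible_finite_Union_image)
      show "pairwise (\<lambda>i j. negligible (A i \<inter> A j)) G"
        using G(1) assms(3) unfolding pairwise_def disjnt_def by (metis negligible_empty subsetD)
    qed (use G assms(2) in auto)
    then show "measure lebesgue (\<Union>j\<in>C. A j) \<le> B + e" using D(3) assms(6)[OF G(2,1)] by simp
  qed
qed

lemma sum_increments_nested_le:
  fixes g :: "real \<Rightarrow> real"
  assumes "mono g" and "finite G" and "\<And>j. j \<in> G \<Longrightarrow> 0 < snd j"
    and "pairwise (\<lambda>i j. disjnt {fst i..fst i + snd i} {fst j..fst j + snd j}) G"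
    and "\<And>j. j \<in> G \<Longrightarrow> fst (f j) \<le> fst j \<and> fst j + snd j \<le> fst (f j) + snd (f j)"
  shows "(\<Sum>j\<in>G. g (fst j + snd j) - g (fst j)) \<le> (\<Sum>i\<in>f ` G. g (fst i + snd i) - g (fst i))"
proof -
  have "(\<Sum>j\<in>G. g (fst j + snd j) - g (fst j))
        = (\<Sum>i\<in>f ` G. \<Sum>j\<in>{j\<in>G. f j = i}. g (fst j + snd j) - g (fst j))"
    using \<open>finite G\<close> by (simp add: sum.group[symmetric])
  also have "\<dots> \<le> (\<Sum>i\<in>f ` G. g (fst i + snd i) - g (fst i))"
  proof (rule sum_mono)
    fix i assume "i \<in> f ` G"
    then obtain j where "j \<in> G" "i = f j" by blast
    show "(\<Sum>j\<in>{j\<in>G. f j = i}. g (fst j + snd j) - g (fst j)) \<le> g (fst i + snd i) - g (fst i)"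
    proof (rule sum_increments_le[OF \<open>mono g\<close>])
      show "fst i \<le> fst i + snd i" using assms(3,5)[OF \<open>j \<in> G\<close>] \<open>i = f j\<close> by simp
      show "pairwise (\<lambda>i j. disjnt {fst i..fst i + snd i} {fst j..fst j + snd j}) {j \<in> G. f j = i}"
        using assms(4) by (rule pairwise_subset) blast
    qed (use assms(2,3,5) in auto)
  qed
  finally show ?thesis .
qed

lemma measure_disjoint_intervals:
  assumes "finite P" and "\<And>i. i \<in> P \<Longrightarrow> 0 \<le> snd i"
    and "pairwise (\<lambda>i j. disjnt {fst i..fst i + snd i} {fst j..fst j + snd j}) P"
  shows "measure lebesgue (\<Union>i\<in>P. {fst i..fst i + snd i}) = (\<Sum>i\<in>P. snd i)"
proof -
  have "measure lebesgue (\<Union>i\<in>P. {fst i..fst i + snd i}) = (\<Sum>i\<in>P. measure lebesgue {fst i..fst i + snd i})"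
  proof (rule measure_negligible_finite_Union_image)
    show "pairwise (\<lambda>i j. negligible ({fst i..fst i + snd i} \<inter> {fst j..fst j + snd j})) P"
      by (rule pairwise_mono[OF assms(3)]) (auto simp: disjnt_def)
  qed (use assms(1) in auto)
  also have "\<dots> = (\<Sum>i\<in>P. snd i)" using assms(2) by (intro sum.cong) auto
  finally show ?thesis .
qed

lemma lmeasurable_cover_mod_negligible:
  assumes "E \<subseteq> W \<union> Z" and "W \<in> lmeasurable" and "negligible Z"
  shows "\<exists>T. E \<subseteq> T \<and> T \<in> lmeasurable \<and> measure lebesgue T = measure lebesgue W"
proof -
  have "negligible (sym_diff W (W \<union> Z))" by (rule negligible_subset[OF \<open>negligible Z\<close>]) auto
  then show ?thesis using assms(1) lmeasurable_negligible_symdiff[OF assms(2)] measure_negligible_symdiff[OF assms(2)]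
    by blast
qed

lemma measure_nested_increment_intervals_le:
  fixes g :: "real \<Rightarrow> real" and C1 C2 :: "(real \<times> real) set"
  defines "ivl \<equiv> \<lambda>j. {fst j..fst j + snd j}" and "inc \<equiv> \<lambda>j. g (fst j + snd j) - g (fst j)"
  assumes "mono g" and "0 \<le> p" and "0 < q" and "countable C2" and "V \<in> lmeasurable"
    and C1_disj: "pairwise (\<lambda>i j. disjnt (ivl i) (ivl j)) C1"
    and C1: "\<And>i. i \<in> C1 \<Longrightarrow> 0 < snd i \<and> ivl i \<subseteq> V \<and> inc i \<le> p * snd i"
    and C2_disj: "pairwise (\<lambda>i j. disjnt (ivl i) (ivl j)) C2"
    and C2: "\<And>j. j \<in> C2 \<Longrightarrow> 0 < snd j \<and> q * snd j \<le> inc j \<and> (\<exists>i\<in>C1. ivl j \<subseteq> ivl i)"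
  shows "(\<Union>j\<in>C2. ivl j) \<in> lmeasurable" and "measure lebesgue (\<Union>j\<in>C2. ivl j) \<le> p / q * measure lebesgue V"
proof -
  define parent where "parent j = (SOME i. i \<in> C1 \<and> ivl j \<subseteq> ivl i)" for j
  have parent: "parent j \<in> C1" "ivl j \<subseteq> ivl (parent j)" if "j \<in> C2" for j
    using someI_ex[OF C2[OF that, THEN conjunct2, THEN conjunct2, unfolded Bex_def]]
    unfolding parent_def by auto
  have sum_le: "(\<Sum>j\<in>G. snd j) \<le> p / q * measure lebesgue V" if G: "finite G" "G \<subseteq> C2" for G
  proof -
    have parent_G: "parent ` G \<subseteq> C1" using parent(1) G by blast
    have "(\<Sum>j\<in>G. snd j) \<le> (\<Sum>j\<in>G. inc j / q)"
      using C2 G \<open>0 < q\<close> by (intro sum_mono) (auto simp: pos_le_divide_eq mult.commute)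
    also have "\<dots> = (\<Sum>j\<in>G. inc j) / q" by (simp add: sum_divide_distrib)
    also have "\<dots> \<le> (\<Sum>i\<in>parent ` G. inc i) / q"
      unfolding inc_def
    proof (intro divide_right_mono sum_increments_nested_le[OF \<open>mono g\<close> G(1)])
      show "pairwise (\<lambda>i j. disjnt {fst i..fst i + snd i} {fst j..fst j + snd j}) G"
        using C2_disj G(2) unfolding ivl_def by (rule pairwise_subset)
      fix j assume "j \<in> G"
      then have "0 < snd j" "ivl j \<subseteq> ivl (parent j)" using C2[of j] parent(2)[of j] G(2) by auto
      then show "fst (parent j) \<le> fst j \<and> fst j + snd j \<le> fst (parent j) + snd (parent j)"
        unfolding ivl_def by (auto simp: subset_iff)
    qed (use G C2 \<open>0 < q\<close> in auto)
    also have "\<dots> \<le> (\<Sum>i\<in>parent ` G. p * snd i) / q"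
      using C1 parent_G \<open>0 < q\<close> by (intro divide_right_mono sum_mono) (blast, simp)
    also have "\<dots> = p / q * measure lebesgue (\<Union>i\<in>parent ` G. ivl i)"
    proof -
      have "measure lebesgue (\<Union>i\<in>parent ` G. ivl i) = (\<Sum>i\<in>parent ` G. snd i)"
        unfolding ivl_def
      proof (rule measure_disjoint_intervals)
        show "0 \<le> snd i" if "i \<in> parent ` G" for i using C1 parent_G that by (meson less_imp_le subsetD)
        show "pairwise (\<lambda>i j. disjnt {fst i..fst i + snd i} {fst j..fst j + snd j}) (parent ` G)"
          using C1_disj parent_G unfolding ivl_def by (rule pairwise_subset)
      qed (use G(1) in simp)
      then show ?thesis by (simp add: sum_distrib_left[symmetric])
    qed
    also have "\<dots> \<le> p / q * measure lebesgue V"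
    proof (intro mult_left_mono measure_mono_fmeasurable)
      show "(\<Union>i\<in>parent ` G. ivl i) \<subseteq> V" using C1 parent_G by blast
    qed (use G \<open>0 \<le> p\<close> \<open>0 < q\<close> \<open>V \<in> lmeasurable\<close> in \<open>auto simp: ivl_def intro!: sets.finite_UN\<close>)
    finally show ?thesis .
  qed
  have "(\<Union>j\<in>C2. ivl j) \<subseteq> V" using parent C1 by blast
  moreover have "(\<Sum>j\<in>G. measure lebesgue (ivl j)) \<le> p / q * measure lebesgue V" if "finite G" "G \<subseteq> C2" for G
    using sum_le[OF that] that C2 by (simp add: ivl_def subset_eq less_imp_le)
  ultimately show "(\<Union>j\<in>C2. ivl j) \<in> lmeasurable" "measure lebesgue (\<Union>j\<in>C2. ivl j) \<le> p / q * measure lebesgue V"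
    using measure_disjoint_Union_le[OF \<open>countable C2\<close> _ C2_disj _ \<open>V \<in> lmeasurable\<close>] by (auto simp: ivl_def)
qed

(* Cover E up to a null set by disjoint left intervals in V on which g grows slower than p, and
   then by disjoint right intervals inside these on which g grows faster than q. By monotonicity the
   right intervals have total length at most p / q times that of the left ones. *)
lemma dini_gap_measure_contracts:
  fixes g :: "real \<Rightarrow> real"
  assumes "mono g" and "0 < p" and "p < q" and "E \<subseteq> V" and "open V" and "V \<in> lmeasurable"
    and left: "\<And>x \<delta>. x \<in> E \<Longrightarrow> 0 < \<delta> \<Longrightarrow> \<exists>h. 0 < h \<and> h < \<delta> \<and> g x - g (x - h) < p * h"
    and right: "\<And>x \<delta>. x \<in> E \<Longrightarrow> 0 < \<delta> \<Longrightarrow> \<exists>h. 0 < h \<and> h < \<delta> \<and> q * h < g (x + h) - g x"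
  shows "\<exists>T. E \<subseteq> T \<and> T \<in> lmeasurable \<and> measure lebesgue T \<le> p / q * measure lebesgue V"
proof -
  define ivl where "ivl j = {fst j..fst j + snd j}" for j :: "real \<times> real"
  define inc where "inc j = g (fst j + snd j) - g (fst j)" for j :: "real \<times> real"
  define K1 where "K1 = {j. 0 < snd j \<and> ivl j \<subseteq> V \<and> inc j < p * snd j}"
  obtain C1 where C1: "countable C1" "C1 \<subseteq> K1" "pairwise (\<lambda>i j. disjnt (ivl i) (ivl j)) C1"
    "negligible (E - (\<Union>i\<in>C1. ivl i))"
  proof (rule Vitali_covering_intervals[of K1 E])
    fix x d :: real assume x: "x \<in> E" and "0 < d"
    obtain e where "0 < e" "ball x e \<subseteq> V" using \<open>open V\<close> \<open>E \<subseteq> V\<close> x open_contains_ball by blast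
    moreover obtain h where "0 < h" "h < min e d" "g x - g (x - h) < p * h"
      using left[OF x, of "min e d"] \<open>0 < e\<close> \<open>0 < d\<close> by auto
    ultimately have "(x - h, h) \<in> K1" unfolding K1_def ivl_def inc_def by (force simp: dist_real_def)
    then show "\<exists>j\<in>K1. x \<in> {fst j..fst j + snd j} \<and> snd j < d" using \<open>0 < h\<close> \<open>h < min e d\<close> by force
  qed (auto simp: K1_def ivl_def)
  define K2 where "K2 = {j. 0 < snd j \<and> q * snd j < inc j \<and> (\<exists>i\<in>C1. ivl j \<subseteq> ivl i)}"
  define E2 where "E2 = {x\<in>E. \<exists>i\<in>C1. fst i < x \<and> x < fst i + snd i}"
  obtain C2 where C2: "countable C2" "C2 \<subseteq> K2" "pairwise (\<lambda>i j. disjnt (ivl i) (ivl j)) C2"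
    "negligible (E2 - (\<Union>j\<in>C2. ivl j))"
  proof (rule Vitali_covering_intervals[of K2 E2])
    fix x d :: real assume "x \<in> E2" and "0 < d"
    then obtain i where i: "i \<in> C1" "fst i < x" "x < fst i + snd i" "x \<in> E" unfolding E2_def by auto
    obtain h where "0 < h" "h < min (fst i + snd i - x) d" "q * h < g (x + h) - g x"
      using right[OF i(4), of "min (fst i + snd i - x) d"] i \<open>0 < d\<close> by auto
    then have "(x, h) \<in> K2" using i unfolding K2_def ivl_def inc_def by force
    then show "\<exists>j\<in>K2. x \<in> {fst j..fst j + snd j} \<and> snd j < d" using \<open>0 < h\<close> \<open>h < min _ d\<close> by force
  qed (auto simp: K2_def ivl_def)
  have C1_props: "0 < snd i \<and> ivl i \<subseteq> V \<and> inc i \<le> p * snd i" if "i \<in> C1" for i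
    using C1(2) that unfolding K1_def by auto
  have C2_props: "0 < snd j \<and> q * snd j \<le> inc j \<and> (\<exists>i\<in>C1. ivl j \<subseteq> ivl i)" if "j \<in> C2" for j
    using C2(2) that unfolding K2_def by auto
  have "0 \<le> p" "0 < q" using assms(2,3) by auto
  from measure_nested_increment_intervals_le[OF \<open>mono g\<close> this C2(1) \<open>V \<in> lmeasurable\<close>
      C1(3)[unfolded ivl_def] C1_props[unfolded ivl_def inc_def] C2(3)[unfolded ivl_def]
      C2_props[unfolded ivl_def inc_def]]
  have "(\<Union>j\<in>C2. ivl j) \<in> lmeasurable \<and> measure lebesgue (\<Union>j\<in>C2. ivl j) \<le> p / q * measure lebesgue V"
    unfolding ivl_def by blast
  then obtain W where W: "W = (\<Union>j\<in>C2. ivl j)" "W \<in> lmeasurable"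
    and W_le: "measure lebesgue W \<le> p / q * measure lebesgue V" by blast
  define Z where "Z = (E2 - W) \<union> (E - (\<Union>i\<in>C1. ivl i)) \<union> (\<Union>i\<in>C1. {fst i, fst i + snd i})"
  have "negligible (\<Union>i\<in>C1. {fst i, fst i + snd i})"
    using C1(1) by (intro negligible_countable_Union) auto
  then have "negligible Z" unfolding Z_def W(1) using C2(4) C1(4) by auto
  moreover have "E \<subseteq> W \<union> Z" unfolding Z_def E2_def W(1) ivl_def by force
  ultimately show ?thesis using lmeasurable_cover_mod_negligible[OF _ W(2)] W_le by metis
qed

lemma negligible_if_outer_measure_contracts:
  fixes E :: "'a::euclidean_space set"
  assumes "bounded E" and "0 \<le> c" and "c < 1"
    and contract: "\<And>V. open V \<Longrightarrow> E \<subseteq> V \<Longrightarrow> V \<in> lmeasurable \<Longrightarrow>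
                     \<exists>T. E \<subseteq> T \<and> T \<in> lmeasurable \<and> measure lebesgue T \<le> c * measure lebesgue V"
  shows "negligible E"
proof -
  define M where "M = {measure lebesgue V | V. open V \<and> E \<subseteq> V \<and> V \<in> lmeasurable}"
  obtain r where "E \<subseteq> ball 0 r" using \<open>bounded E\<close> bounded_subset_ballD by blast
  moreover have "open (ball (0::'a) r)" "ball (0::'a) r \<in> lmeasurable" by auto
  ultimately have "measure lebesgue (ball (0::'a) r) \<in> M" unfolding M_def
    by (intro CollectI exI[of _ "ball 0 r"] conjI refl) auto
  then have "M \<noteq> {}" by auto
  have "bdd_below M" unfolding M_def by (rule bdd_belowI[of _ 0]) auto
  define s where "s = Inf M" \<comment> \<open>the outer measure of E\<close>
  have "0 \<le> s" unfolding s_def using \<open>M \<noteq> {}\<close> by (intro cInf_greatest) (auto simp: M_def)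
  have s_le: "s \<le> c * (s + e) + e" if "0 < e" for e
  proof -
    obtain V where V: "open V" "E \<subseteq> V" "V \<in> lmeasurable" "measure lebesgue V < s + e"
      using cInf_lessD[OF \<open>M \<noteq> {}\<close>, of "s + e"] \<open>0 < e\<close> unfolding s_def M_def by auto
    obtain T where T: "E \<subseteq> T" "T \<in> lmeasurable" "measure lebesgue T \<le> c * measure lebesgue V"
      using contract[OF V(1-3)] by blast
    obtain T' where T': "open T'" "T \<subseteq> T'" "T' - T \<in> lmeasurable" "emeasure lebesgue (T' - T) < ennreal e"
      using sets_lebesgue_outer_open[of T e] T(2) \<open>0 < e\<close> by auto
    have "T' = T \<union> (T' - T)" using T'(2) by auto
    then have "T' \<in> lmeasurable" "measure lebesgue T' \<le> measure lebesgue T + measure lebesgue (T' - T)"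
      using T(2) T'(3) by (metis fmeasurable.Un, metis fmeasurableD measure_Un_le)
    moreover have "measure lebesgue (T' - T) < e"
      using T'(3,4) \<open>0 < e\<close> by (simp add: emeasure_eq_measure2 ennreal_less_iff)
    moreover have "measure lebesgue T' \<in> M" unfolding M_def using T'(1,2) T(1) \<open>T' \<in> lmeasurable\<close>
      by (intro CollectI exI[of _ T'] conjI refl) auto
    then have "s \<le> measure lebesgue T'" unfolding s_def using \<open>bdd_below M\<close> by (rule cInf_lower)
    moreover have "c * measure lebesgue V \<le> c * (s + e)" using V(4) \<open>0 \<le> c\<close> by (simp add: mult_left_mono)
    ultimately show ?thesis using T(3) by linarith
  qed
  have "s \<le> c * s"
  proof (rule field_le_epsilon)
    fix e :: real assume "0 < e"
    have "c * (e / 2) \<le> e / 2" using \<open>0 \<le> c\<close> \<open>c < 1\<close> \<open>0 < e\<close> by (simp add: mult_left_le_one_le)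
    moreover have "s \<le> c * s + c * (e / 2) + e / 2" using s_le[of "e / 2"] \<open>0 < e\<close> by (simp add: algebra_simps)
    ultimately show "s \<le> c * s + e" by linarith
  qed
  then have "s = 0" using \<open>0 \<le> s\<close> \<open>c < 1\<close> by (metis mult_less_cancel_right2 not_le order_antisym)
  show ?thesis unfolding negligible_outer
  proof (intro allI impI)
    fix e :: real assume "0 < e"
    then obtain m where "m \<in> M" "m < e" using cInf_lessD[OF \<open>M \<noteq> {}\<close>, of e] \<open>s = 0\<close> unfolding s_def by auto
    then show "\<exists>T. E \<subseteq> T \<and> T \<in> lmeasurable \<and> measure lebesgue T < e" unfolding M_def by auto
  qed
qed

lemma negligible_dini_gap:
  fixes g :: "real \<Rightarrow> real"
  assumes "mono g" and "p < q" and "bounded E"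
    and left: "\<And>x \<delta>. x \<in> E \<Longrightarrow> 0 < \<delta> \<Longrightarrow> \<exists>h. 0 < h \<and> h < \<delta> \<and> g x - g (x - h) < p * h"
    and right: "\<And>x \<delta>. x \<in> E \<Longrightarrow> 0 < \<delta> \<Longrightarrow> \<exists>h. 0 < h \<and> h < \<delta> \<and> q * h < g (x + h) - g x"
  shows "negligible E"
proof (cases "0 < p")
  case True
  show ?thesis
  proof (rule negligible_if_outer_measure_contracts[OF \<open>bounded E\<close>, of "p / q"])
    show "0 \<le> p / q" "p / q < 1" using True \<open>p < q\<close> by auto
  qed (rule dini_gap_measure_contracts[OF \<open>mono g\<close> True \<open>p < q\<close> _ _ _ left right]; assumption)
next
  case False
  have "x \<notin> E" for x
  proof
    assume "x \<in> E"
    then obtain h where "0 < h" "g x - g (x - h) < p * h" using left[of x 1] by auto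
    moreover have "g (x - h) \<le> g x" using \<open>mono g\<close> \<open>0 < h\<close> by (simp add: monoD)
    ultimately show False using False by (smt (verit) mult_nonpos_nonneg)
  qed
  then have "E = {}" by blast
  then show ?thesis by simp
qed

lemma tendsto_if_no_oscillation:
  fixes S :: "'a \<Rightarrow> real"
  assumes "F \<noteq> bot" and bounded: "eventually (\<lambda>k. \<bar>S k\<bar> \<le> M) F"
    and no_osc: "\<And>p q. p \<in> \<rat> \<Longrightarrow> q \<in> \<rat> \<Longrightarrow> p < q \<Longrightarrow>
                   frequently (\<lambda>k. S k < p) F \<Longrightarrow> frequently (\<lambda>k. q < S k) F \<Longrightarrow> False"
  obtains D where "(S \<longlongrightarrow> D) F"
proof -
  define l where "l = Liminf F (\<lambda>k. ereal (S k))"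
  define u where "u = Limsup F (\<lambda>k. ereal (S k))"
  have "- ereal M \<le> l" unfolding l_def le_Liminf_iff
  proof (intro allI impI)
    fix y assume "y < - ereal M"
    show "\<forall>\<^sub>F k in F. y < ereal (S k)"
    proof (rule eventually_mono[OF bounded])
      fix k assume "\<bar>S k\<bar> \<le> M"
      then have "- ereal M \<le> ereal (S k)" by simp
      with \<open>y < - ereal M\<close> show "y < ereal (S k)" by (rule less_le_trans)
    qed
  qed
  have "u \<le> ereal M" unfolding u_def Limsup_le_iff
  proof (intro allI impI)
    fix y assume "ereal M < y"
    show "\<forall>\<^sub>F k in F. ereal (S k) < y"
    proof (rule eventually_mono[OF bounded])
      fix k assume "\<bar>S k\<bar> \<le> M"
      then have "ereal (S k) \<le> ereal M" by simp
      then show "ereal (S k) < y" using \<open>ereal M < y\<close> by (rule le_less_trans)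
    qed
  qed
  have "l = u"
  proof (rule ccontr)
    assume "l \<noteq> u"
    then have "l < u" using Liminf_le_Limsup[OF \<open>F \<noteq> bot\<close>] unfolding l_def u_def by (simp add: order_less_le)
    then obtain z1 z2 where "l < ereal z1" "z1 < z2" "ereal z2 < u"
      by (metis ereal_dense2 less_ereal.simps(1))
    then obtain p q where pq: "p \<in> \<rat>" "q \<in> \<rat>" "z1 < p" "p < q" "q < z2"
      by (metis Rats_dense_in_real order.strict_trans)
    have "frequently (\<lambda>k. S k < p) F"
    proof (rule ccontr)
      assume "\<not> frequently (\<lambda>k. S k < p) F"
      then have "ereal p \<le> l" unfolding l_def le_Liminf_iff not_frequently
        by (auto elim!: eventually_mono intro: less_le_trans[of _ "ereal p"])
      then have "ereal p < ereal z1" using \<open>l < ereal z1\<close> by (rule le_less_trans)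
      then show False using \<open>z1 < p\<close> by simp
    qed
    moreover have "frequently (\<lambda>k. q < S k) F"
    proof (rule ccontr)
      assume "\<not> frequently (\<lambda>k. q < S k) F"
      then have "u \<le> ereal q" unfolding u_def Limsup_le_iff not_frequently
        by (auto elim!: eventually_mono intro: le_less_trans[of _ "ereal q"])
      with \<open>ereal z2 < u\<close> have "ereal z2 < ereal q" by (rule less_le_trans)
      then show False using \<open>q < z2\<close> by simp
    qed
    ultimately show False using no_osc pq by blast
  qed
  then obtain D where "l = ereal D"
    using \<open>- ereal M \<le> l\<close> \<open>u \<le> ereal M\<close> by (cases l) auto
  have "((\<lambda>k. ereal (S k)) \<longlongrightarrow> l) F"
    using \<open>l = u\<close> by (intro Liminf_eq_Limsup[OF \<open>F \<noteq> bot\<close>]) (simp_all add: l_def u_def)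
  then show thesis using that[of D] unfolding \<open>l = ereal D\<close> by (simp add: lim_ereal)
qed

lemma frequently_at_split:
  "frequently P (at (x::real)) \<longleftrightarrow> frequently P (at_left x) \<or> frequently P (at_right x)"
  unfolding frequently_def eventually_at_split by blast

lemma differentiable_at_if_no_one_sided_gap:
  fixes g :: "real \<Rightarrow> real" and x :: real
  defines "S \<equiv> \<lambda>k. (g (x + k) - g x) / k"
  assumes bounded: "\<And>k. k \<noteq> 0 \<Longrightarrow> \<bar>S k\<bar> \<le> M"
    and no_gap: "\<And>p q F G. p \<in> \<rat> \<Longrightarrow> q \<in> \<rat> \<Longrightarrow> p < q \<Longrightarrow>
                   (F, G) \<in> {(at_left 0, at_right 0), (at_right 0, at_left 0)} \<Longrightarrow>
                   frequently (\<lambda>k. S k < p) F \<Longrightarrow> frequently (\<lambda>k. q < S k) G \<Longrightarrow> False"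
  shows "g differentiable at x"
proof -
  define sides :: "real filter set" where "sides = {at_left 0, at_right 0}"
  define pairs :: "(real filter \<times> real filter) set"
    where "pairs = {(at_left 0, at_right 0), (at_right 0, at_left 0)}"
  have other_side: "\<exists>H. (F, H) \<in> pairs \<and> (H, F) \<in> pairs \<and> H \<noteq> bot" if "F \<in> sides" for F
    using that unfolding sides_def pairs_def by auto
  have "eventually (\<lambda>k. \<bar>S k\<bar> \<le> M) (at 0)"
    unfolding eventually_at using bounded by (intro exI[of _ 1]) auto
  moreover have False
    if pq: "p \<in> \<rat>" "q \<in> \<rat>" "p < q"
      and freq: "frequently (\<lambda>k. S k < p) (at 0)" "frequently (\<lambda>k. q < S k) (at 0)" for p q
  proof -
    obtain F G where F: "F \<in> sides" "frequently (\<lambda>k. S k < p) F" and G: "G \<in> sides" "frequently (\<lambda>k. q < S k) G"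
      using freq unfolding frequently_at_split sides_def by blast
    show False
    proof (cases "F = G")
      case False
      then have "(F, G) \<in> pairs" using F(1) G(1) unfolding sides_def pairs_def by auto
      then show False using no_gap[OF pq] F(2) G(2) unfolding pairs_def by blast
    next
      case True
      \<comment> \<open>both on the same side: compare with the other side through rationals between p and q\<close>
      obtain H where H: "(F, H) \<in> pairs" "(H, F) \<in> pairs" "H \<noteq> bot" using other_side[OF F(1)] by blast
      obtain m m' where m: "m \<in> \<rat>" "m' \<in> \<rat>" "p < m" "m < m'" "m' < q"
        using pq(3) by (metis Rats_dense_in_real order.strict_trans)
      show False
      proof (cases "frequently (\<lambda>k. m < S k) H")
        case True
        then show False using no_gap[OF pq(1) m(1,3)] H(1) F(2) unfolding pairs_def by blast
      next
        case False
        then have "eventually (\<lambda>k. S k < m') H"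
          unfolding not_frequently by (rule eventually_mono) (use m(4) in auto)
        then have "frequently (\<lambda>k. S k < m') H" using H(3) by (simp add: eventually_frequently)
        then show False using no_gap[OF m(2) pq(2) m(5)] H(2) G(2) True unfolding pairs_def by blast
      qed
    qed
  qed
  ultimately obtain D where "(S \<longlongrightarrow> D) (at 0)"
    using tendsto_if_no_oscillation[of "at 0" S M] by auto
  then have "(g has_real_derivative D) (at x)" unfolding DERIV_def S_def by simp
  then show ?thesis using real_differentiable_def by blast
qed

lemma frequently_at_right_0_iff:
  "frequently P (at_right (0::real)) \<longleftrightarrow> (\<forall>\<delta>>0. \<exists>h. 0 < h \<and> h < \<delta> \<and> P h)"
  unfolding frequently_def eventually_at_right_field by auto

lemma frequently_at_left_0_iff:
  "frequently P (at_left (0::real)) \<longleftrightarrow> (\<forall>\<delta>>0. \<exists>h. 0 < h \<and> h < \<delta> \<and> P (- h))"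
  unfolding at_left_minus frequently_filtermap by (simp add: frequently_at_right_0_iff)

lemma negligible_left_right_gap:
  fixes g :: "real \<Rightarrow> real"
  assumes "mono g" and "p < q"
  shows "negligible {x. frequently (\<lambda>k. (g (x + k) - g x) / k < p) (at_left 0)
                      \<and> frequently (\<lambda>k. q < (g (x + k) - g x) / k) (at_right 0)}" (is "negligible ?E")
proof -
  have "negligible (?E \<inter> ball 0 (real n))" for n
  proof (rule negligible_dini_gap[OF assms])
    fix x \<delta> :: real assume x: "x \<in> ?E \<inter> ball 0 (real n)" and "0 < \<delta>"
    then obtain h where "0 < h" "h < \<delta>" "(g (x + - h) - g x) / - h < p"
      unfolding frequently_at_left_0_iff by blast
    then show "\<exists>h. 0 < h \<and> h < \<delta> \<and> g x - g (x - h) < p * h"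
      by (intro exI[of _ h]) (auto simp: field_simps)
    obtain h' where "0 < h'" "h' < \<delta>" "q < (g (x + h') - g x) / h'"
      using x \<open>0 < \<delta>\<close> unfolding frequently_at_right_0_iff by blast
    then show "\<exists>h. 0 < h \<and> h < \<delta> \<and> q * h < g (x + h) - g x"
      by (intro exI[of _ h']) (auto simp: field_simps)
  qed (intro bounded_Int disjI2 bounded_ball)
  then have "negligible (\<Union>n. ?E \<inter> ball 0 (real n))" by (intro negligible_countable_Union) auto
  moreover have "?E = (\<Union>n. ?E \<inter> ball 0 (real n))"
    by (auto simp: dist_real_def intro: reals_Archimedean2)
  ultimately show ?thesis by simp
qed

lemma negligible_right_left_gap:
  fixes g :: "real \<Rightarrow> real"
  assumes "mono g" and "p < q"
  shows "negligible {x. frequently (\<lambda>k. (g (x + k) - g x) / k < p) (at_right 0)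
                      \<and> frequently (\<lambda>k. q < (g (x + k) - g x) / k) (at_left 0)}" (is "negligible ?E")
proof -
  define g' where "g' y = - g (- y)" for y \<comment> \<open>swaps left and right difference quotients\<close>
  have "mono g'" using \<open>mono g\<close> unfolding g'_def mono_def by auto
  have quotient: "(g' (y + k) - g' y) / k = (g (- y + - k) - g (- y)) / - k" for y k
    unfolding g'_def by (simp add: minus_divide_left add.commute)
  have flip_left: "frequently (\<lambda>k. P (- k)) (at_left (0::real)) \<longleftrightarrow> frequently P (at_right 0)" for P
    by (simp add: at_left_minus frequently_filtermap)
  have flip_right: "frequently (\<lambda>k. P (- k)) (at_right (0::real)) \<longleftrightarrow> frequently P (at_left 0)" for P
    by (simp add: at_right_minus frequently_filtermap)
  define E' where "E' = {y. frequently (\<lambda>k. (g' (y + k) - g' y) / k < p) (at_left 0)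
                      \<and> frequently (\<lambda>k. q < (g' (y + k) - g' y) / k) (at_right 0)}"
  have "x \<in> ?E \<longleftrightarrow> - x \<in> E'" for x
    unfolding E'_def quotient mem_Collect_eq minus_minus
    using flip_left[of "\<lambda>k. (g (x + k) - g x) / k < p"] flip_right[of "\<lambda>k. q < (g (x + k) - g x) / k"]
    by simp
  moreover have "x \<in> uminus ` E' \<longleftrightarrow> - x \<in> E'" for x by (metis image_iff minus_minus)
  ultimately have "?E = uminus ` E'" by blast
  also have "negligible \<dots>" unfolding E'_def
    by (rule negligible_differentiable_image_negligible[OF order_refl
          negligible_left_right_gap[OF \<open>mono g'\<close> \<open>p < q\<close>]]) (auto intro!: derivative_intros)
  finally show ?thesis .
qed

lemma lipschitz_differentiable_ae:
  fixes f :: "real \<Rightarrow> real"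
  assumes "L-lipschitz_on UNIV f"
  shows "negligible {x. \<not> f differentiable at x}"
proof -
  have "0 \<le> L" and lip: "\<bar>f x - f y\<bar> \<le> L * \<bar>x - y\<bar>" for x y
    using assms lipschitz_on_nonneg lipschitz_onD[OF assms] by (auto simp: dist_real_def)
  define g where "g x = f x + L * x" for x
  have "mono g"
  proof
    fix x y :: real assume "x \<le> y"
    then show "g x \<le> g y" using lip[of x y] unfolding g_def by (simp add: abs_le_iff algebra_simps)
  qed
  define S where "S x k = (g (x + k) - g x) / k" for x k
  have bounded: "\<bar>S x k\<bar> \<le> 2 * L" if "k \<noteq> 0" for x k
  proof -
    have "g (x + k) - g x = (f (x + k) - f x) + L * k" unfolding g_def by (simp add: algebra_simps)
    then have "\<bar>g (x + k) - g x\<bar> \<le> \<bar>f (x + k) - f x\<bar> + L * \<bar>k\<bar>"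
      using abs_triangle_ineq[of "f (x + k) - f x" "L * k"] \<open>0 \<le> L\<close> by (simp add: abs_mult)
    also have "\<dots> \<le> 2 * L * \<bar>k\<bar>" using lip[of "x + k" x] by simp
    finally show ?thesis using that by (simp add: S_def abs_divide divide_le_eq)
  qed
  define gap where "gap p q F G = {x. frequently (\<lambda>k. S x k < p) F \<and> frequently (\<lambda>k. q < S x k) G}"
    for p q :: real and F G
  define B where "B = (\<Union>(p, q)\<in>{(p, q). p \<in> \<rat> \<and> q \<in> \<rat> \<and> p < q}.
                        gap p q (at_left 0) (at_right 0) \<union> gap p q (at_right 0) (at_left 0))"
  have "{x. \<not> f differentiable at x} \<subseteq> B"
  proof (clarify, rule ccontr)
    fix x assume "\<not> f differentiable at x" and "x \<notin> B"
    have "g differentiable at x"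
      by (rule differentiable_at_if_no_one_sided_gap[where M = "2 * L"])
        (use bounded \<open>x \<notin> B\<close> in \<open>auto simp: S_def gap_def B_def\<close>)
    then have "(\<lambda>x. g x - L * x) differentiable at x" by (intro derivative_intros) auto
    then show False using \<open>\<not> f differentiable at x\<close> by (simp add: g_def)
  qed
  moreover have "negligible B" unfolding B_def
  proof (rule negligible_countable_Union)
    have "{(p, q). p \<in> \<rat> \<and> q \<in> \<rat> \<and> p < q} \<subseteq> \<rat> \<times> \<rat>" by auto
    then show "countable ((\<lambda>(p, q). gap p q (at_left 0) (at_right 0) \<union> gap p q (at_right 0) (at_left 0)) `
                 {(p, q). p \<in> \<rat> \<and> q \<in> \<rat> \<and> p < q})"
      by (intro countable_image countable_subset[OF _ countable_SIGMA[OF countable_rat countable_rat]])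
  qed (auto simp: gap_def S_def intro!: negligible_left_right_gap negligible_right_left_gap \<open>mono g\<close>)
  ultimately show ?thesis by (rule negligible_subset[rotated])
qed

section \<open>The fundamental theorem of calculus for Lipschitz functions\<close>

lemma integral_average_tendsto:
  fixes f :: "real \<Rightarrow> real"
  assumes lip: "L-lipschitz_on UNIV f" and pos: "\<And>n. 0 < H n" and "H \<longlonglongrightarrow> 0"
  shows "(\<lambda>n. integral {c..c + H n} f / H n) \<longlonglongrightarrow> f c"
proof (rule LIM_zero_cancel)
  have "0 \<le> L" using lip by (rule lipschitz_on_nonneg)
  have cont: "continuous_on A f" for A
    using lipschitz_on_continuous_on[OF lip] continuous_on_subset by blast
  have bound: "\<bar>integral {c..c + H n} f / H n - f c\<bar> \<le> L * H n" for n
  proof -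
    have "integral {c..c + H n} (\<lambda>x. f x - f c) = integral {c..c + H n} f - H n * f c"
      using pos[of n] integral_diff[OF integrable_continuous_real[OF cont] integrable_const_ivl, of c "c + H n" "f c"]
      by simp
    then have avg: "integral {c..c + H n} f / H n - f c = integral {c..c + H n} (\<lambda>x. f x - f c) / H n"
      using pos[of n] by (simp add: field_simps)
    have "norm (integral {c..c + H n} (\<lambda>x. f x - f c)) \<le> (L * H n) * ((c + H n) - c)"
    proof (rule integral_bound)
      fix t assume "t \<in> {c..c + H n}"
      then have "L * \<bar>t - c\<bar> \<le> L * H n" using \<open>0 \<le> L\<close> by (intro mult_left_mono) auto
      then show "norm (f t - f c) \<le> L * H n"
        using lipschitz_onD[OF lip, of t c] by (simp add: dist_real_def)
    qed (use pos[of n] cont in \<open>auto intro!: continuous_intros\<close>)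
    then show ?thesis unfolding avg using pos[of n] by (simp add: abs_divide divide_le_eq)
  qed
  have "\<forall>n. norm (integral {c..c + H n} f / H n - f c) \<le> L * H n" using bound by simp
  moreover have "(\<lambda>n. L * H n) \<longlonglongrightarrow> 0" using \<open>H \<longlonglongrightarrow> 0\<close> by (rule tendsto_mult_right_zero)
  ultimately show "(\<lambda>n. integral {c..c + H n} f / H n - f c) \<longlonglongrightarrow> 0"
    by (rule Lim_null_comparison[OF always_eventually])
qed

lemma lipschitz_deriv_has_integral:
  fixes f :: "real \<Rightarrow> real"
  assumes lip: "L-lipschitz_on UNIV f" and "a \<le> b"
  shows "(deriv f has_integral (f b - f a)) {a..b}"
proof -
  have cont: "continuous_on A f" for A
    using lipschitz_on_continuous_on[OF lip] continuous_on_subset by blast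
  define S where "S = {a..b} - {x. \<not> f differentiable at x}"
  have spike_S: "negligible {x \<in> {a..b} - S. h x \<noteq> 0}" "negligible {x \<in> S - {a..b}. h x \<noteq> 0}"
    for h :: "real \<Rightarrow> real"
    by (rule negligible_subset[OF lipschitz_differentiable_ae[OF lip]], force simp: S_def)+
  define H where "H n = 1 / real (Suc n)" for n
  have H: "0 < H n" for n unfolding H_def by simp
  have "H \<longlonglongrightarrow> 0"
    unfolding H_def using LIMSEQ_inverse_real_of_nat by (simp add: inverse_eq_divide)
  define quot where "quot n x = (f (x + H n) - f x) / H n" for n x
  have shifted_int: "(\<lambda>x. f (x + H n)) integrable_on {u..v}" for n u v
    by (intro integrable_continuous_real continuous_on_compose2[OF cont[of UNIV]] continuous_intros) auto
  have f_int: "f integrable_on {u..v}" for u v by (rule integrable_continuous_real[OF cont])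
  have "quot n integrable_on {a..b}" for n
    unfolding quot_def by (intro integrable_on_divide integrable_diff shifted_int f_int)
  then have quot_int: "quot n integrable_on S" for n by (rule integrable_spike_set[OF _ spike_S])
  have quot_bounded: "norm (quot n x) \<le> L" for n x
    using lipschitz_onD[OF lip, of "x + H n" x] H[of n] by (simp add: quot_def dist_real_def abs_divide divide_le_eq)
  have quot_tendsto: "(\<lambda>n. quot n x) \<longlonglongrightarrow> deriv f x" if "x \<in> S" for x
  proof -
    have "(f has_real_derivative deriv f x) (at x)"
      using that by (simp add: S_def DERIV_deriv_iff_real_differentiable)
    then have "((\<lambda>k. (f (x + k) - f x) / k) \<longlongrightarrow> deriv f x) (at 0)" by (simp add: DERIV_def)
    moreover have "\<forall>n. H n \<in> UNIV - {0}" using H by (simp add: less_imp_neq[symmetric])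
    ultimately show ?thesis using \<open>H \<longlonglongrightarrow> 0\<close> unfolding quot_def tendsto_at_iff_sequentially comp_def
      by blast
  qed
  have "(\<lambda>x. L) integrable_on S" by (rule integrable_spike_set[OF integrable_const_ivl spike_S])
  note dominated = dominated_convergence[OF quot_int this quot_bounded quot_tendsto]
  have "integral S (quot n) = integral {b..b + H n} f / H n - integral {a..a + H n} f / H n" for n
  proof -
    have shift: "integral {a..b} (\<lambda>x. f (x + H n)) = integral {a + H n..b + H n} f"
      using integral_shift_Icc_real[of a b f "H n"] by (simp add: comp_def add.commute)
    have "integral {a..a + H n} f + integral {a + H n..b + H n} f = integral {a..b + H n} f"
      "integral {a..b} f + integral {b..b + H n} f = integral {a..b + H n} f"
      using H[of n] \<open>a \<le> b\<close> by (auto intro: Henstock_Kurzweil_Integration.integral_combine f_int)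
    then have "integral {a + H n..b + H n} f - integral {a..b} f = integral {b..b + H n} f - integral {a..a + H n} f"
      by linarith
    moreover have "integral S (quot n) = (integral {a..b} (\<lambda>x. f (x + H n)) - integral {a..b} f) / H n"
      unfolding integral_spike_set[OF spike_S(2,1)] quot_def integral_divide
      by (simp add: integral_diff[OF shifted_int f_int])
    ultimately show ?thesis unfolding shift by (simp add: diff_divide_distrib[symmetric])
  qed
  moreover have "(\<lambda>n. integral {b..b + H n} f / H n - integral {a..a + H n} f / H n) \<longlonglongrightarrow> f b - f a"
    by (intro tendsto_diff integral_average_tendsto[OF lip H \<open>H \<longlonglongrightarrow> 0\<close>])
  ultimately have "integral S (deriv f) = f b - f a" using dominated(2) LIMSEQ_unique by auto
  then have "(deriv f has_integral (f b - f a)) S" using dominated(1) by (metis has_integral_integral)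
  then show ?thesis using has_integral_spike_set_eq[OF spike_S(2,1)] by simp
qed

lemma abs_deriv_le_lipschitz:
  fixes f :: "real \<Rightarrow> real"
  assumes lip: "L-lipschitz_on UNIV f" and "f differentiable at x"
  shows "\<bar>deriv f x\<bar> \<le> L"
proof -
  have lim: "((\<lambda>k. (f (x + k) - f x) / k) \<longlongrightarrow> deriv f x) (at 0)"
    using \<open>f differentiable at x\<close> by (simp add: DERIV_deriv_iff_real_differentiable[symmetric] DERIV_def)
  have "\<forall>k. norm ((f (x + k) - f x) / k) \<le> L"
    using lipschitz_onD[OF lip, of "x + _" x] lipschitz_on_nonneg[OF lip]
    by (auto simp: dist_real_def abs_divide divide_le_eq)
  from Lim_norm_ubound[OF trivial_limit_at lim always_eventually[OF this]] show ?thesis by simp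
qed

lemma has_real_derivative_cong_open:
  assumes "open S" and "x \<in> S" and "\<And>y. y \<in> S \<Longrightarrow> f y = g y"
  shows "(f has_real_derivative D) (at x) \<longleftrightarrow> (g has_real_derivative D) (at x)"
  using has_field_derivative_transform_within_open[OF _ assms(1,2)] assms(3) by metis

lemma lipschitz_on_interval_deriv:
  fixes v :: "real \<Rightarrow> real"
  assumes lip: "L-lipschitz_on {a..b} v"
  shows "negligible {x \<in> {a..b}. \<not> v differentiable at x}"
    and "\<And>x. x \<in> {a<..<b} \<Longrightarrow> v differentiable at x \<Longrightarrow> \<bar>deriv v x\<bar> \<le> L"
    and "a \<le> \<alpha> \<Longrightarrow> \<alpha> \<le> \<beta> \<Longrightarrow> \<beta> \<le> b \<Longrightarrow> (deriv v has_integral v \<beta> - v \<alpha>) {\<alpha>..\<beta>}"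
proof -
  define w where "w x = v (max a (min b x))" for x
  have w_eq: "w x = v x" if "x \<in> {a..b}" for x using that by (simp add: w_def)
  have w_lip: "L-lipschitz_on UNIV w" if "a \<le> b"
  proof (rule lipschitz_onI)
    fix x y :: real
    have "dist (w x) (w y) \<le> L * dist (max a (min b x)) (max a (min b y))"
      unfolding w_def using \<open>a \<le> b\<close> by (intro lipschitz_onD[OF lip]) auto
    also have "\<dots> \<le> L * dist x y"
      using lipschitz_on_nonneg[OF lip] by (intro mult_left_mono) (auto simp: dist_real_def)
    finally show "dist (w x) (w y) \<le> L * dist x y" .
  qed (rule lipschitz_on_nonneg[OF lip])
  have same_deriv: "(v has_real_derivative D) (at x) \<longleftrightarrow> (w has_real_derivative D) (at x)"
    if "x \<in> {a<..<b}" for x D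
    using that w_eq by (intro has_real_derivative_cong_open[of "{a<..<b}"]) auto
  then have diff_iff: "v differentiable at x \<longleftrightarrow> w differentiable at x"
    and deriv_eq: "deriv v x = deriv w x" if "x \<in> {a<..<b}" for x
    using that by (simp_all add: real_differentiable_def deriv_def)
  show "negligible {x \<in> {a..b}. \<not> v differentiable at x}"
  proof (cases "a \<le> b")
    case True
    have "{x \<in> {a..b}. \<not> v differentiable at x} \<subseteq> {a, b} \<union> {x. \<not> w differentiable at x}"
      using diff_iff by fastforce
    moreover have "negligible ({a, b} \<union> {x. \<not> w differentiable at x})"
      using lipschitz_differentiable_ae[OF w_lip[OF True]] by simp
    ultimately show ?thesis by (rule negligible_subset[rotated])
  qed simp
  show "\<bar>deriv v x\<bar> \<le> L" if "x \<in> {a<..<b}" "v differentiable at x" for x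
    using abs_deriv_le_lipschitz[OF w_lip] that diff_iff deriv_eq by simp
  assume "a \<le> \<alpha>" "\<alpha> \<le> \<beta>" "\<beta> \<le> b"
  then have "(deriv w has_integral w \<beta> - w \<alpha>) {\<alpha>..\<beta>}"
    by (intro lipschitz_deriv_has_integral[OF w_lip]) auto
  moreover have "deriv w x = deriv v x" if "x \<in> {\<alpha>..\<beta>} - {\<alpha>, \<beta>}" for x
    using deriv_eq that \<open>a \<le> \<alpha>\<close> \<open>\<beta> \<le> b\<close> by auto
  ultimately show "(deriv v has_integral v \<beta> - v \<alpha>) {\<alpha>..\<beta>}"
    using w_eq \<open>a \<le> \<alpha>\<close> \<open>\<alpha> \<le> \<beta>\<close> \<open>\<beta> \<le> b\<close> has_integral_spike_finite_eq[of "{\<alpha>, \<beta>}" "{\<alpha>..\<beta>}" "deriv w" "deriv v"]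
    by simp
qed

section \<open>Differentiation under the integral sign\<close>

lemma integrable_continuous_comp_bounded:
  fixes h W :: "real \<Rightarrow> real"
  assumes "continuous_on UNIV h" and "S \<in> lmeasurable" and "W \<in> borel_measurable (lebesgue_on S)"
    and "\<And>x. x \<in> S \<Longrightarrow> \<bar>W x\<bar> \<le> B"
  shows "(\<lambda>x. h (W x)) integrable_on S"
proof -
  have "compact (h ` cball 0 B)"
    using assms(1) by (intro compact_continuous_image) (auto intro: continuous_on_subset)
  then obtain M where M: "\<forall>y\<in>h ` cball 0 B. norm y \<le> M" using compact_imp_bounded bounded_iff by blast
  show ?thesis
  proof (rule measurable_bounded_by_integrable_imp_integrable)
    show "(\<lambda>x. h (W x)) \<in> borel_measurable (lebesgue_on S)"
      by (rule borel_measurable_continuous_on[OF assms(1,3)])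
    show "norm (h (W x)) \<le> M" if "x \<in> S" for x
      using M assms(4)[OF that] by auto
  qed (use assms(2) in \<open>auto intro: integrable_on_const\<close>)
qed

lemma C1_local_lipschitz_bound:
  fixes \<phi> :: "real \<Rightarrow> real"
  assumes "\<forall>x. \<phi> differentiable at x" and "continuous_on UNIV (deriv \<phi>)"
  obtains M where "0 \<le> M" "\<And>s. \<bar>s\<bar> \<le> \<rho> \<Longrightarrow> \<bar>\<phi> (c + s) - \<phi> c\<bar> \<le> M * \<bar>s\<bar>"
proof -
  have "compact (deriv \<phi> ` cball c \<rho>)"
    using assms(2) by (intro compact_continuous_image) (auto intro: continuous_on_subset)
  then obtain M where M: "\<forall>y\<in>deriv \<phi> ` cball c \<rho>. norm y \<le> M" using compact_imp_bounded bounded_iff by blast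
  have "\<bar>\<phi> (c + s) - \<phi> c\<bar> \<le> max 0 M * \<bar>s\<bar>" if "\<bar>s\<bar> \<le> \<rho>" for s
  proof -
    have "norm (\<phi> (c + s) - \<phi> c) \<le> max 0 M * norm ((c + s) - c)"
    proof (rule field_differentiable_bound[of "cball c \<rho>"])
      show "(\<phi> has_field_derivative deriv \<phi> z) (at z within cball c \<rho>)" for z
        using assms(1) by (simp add: DERIV_deriv_iff_real_differentiable has_field_derivative_at_within)
      show "norm (deriv \<phi> z) \<le> max 0 M" if "z \<in> cball c \<rho>" for z
      proof -
        have "norm (deriv \<phi> z) \<le> M" using M that by blast
        then show ?thesis by simp
      qed
    qed (use that in \<open>auto simp: dist_real_def\<close>)
    then show ?thesis by simp
  qed
  then show thesis using that[of "max 0 M"] by simp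
qed

lemma DERIV_comp_affine_at_0:
  fixes \<phi> :: "real \<Rightarrow> real"
  assumes "\<phi> differentiable at a"
  shows "((\<lambda>t. \<phi> (a + t * b)) has_real_derivative deriv \<phi> a * b) (at 0)"
proof -
  have "(\<phi> has_real_derivative deriv \<phi> (a + 0 * b)) (at (a + 0 * b))"
    using assms by (simp add: DERIV_deriv_iff_real_differentiable)
  moreover have "((\<lambda>t. a + t * b) has_real_derivative b) (at 0)"
    by (auto intro!: derivative_eq_intros)
  ultimately show ?thesis using DERIV_chain2 by fastforce
qed

lemma DERIV_integral_affine_argument:
  fixes \<phi> W :: "real \<Rightarrow> real"
  assumes \<phi>_diff: "\<forall>x. \<phi> differentiable at x" and \<phi>_C1: "continuous_on UNIV (deriv \<phi>)"
    and "S \<in> lmeasurable" and W_int: "W integrable_on S" and W_bound: "\<And>x. x \<in> S \<Longrightarrow> \<bar>W x\<bar> \<le> B"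
  shows "((\<lambda>t. integral S (\<lambda>x. \<phi> (c + t * W x))) has_real_derivative deriv \<phi> c * integral S W) (at 0)"
proof -
  have \<phi>_cont: "continuous_on UNIV \<phi>"
    using \<phi>_diff by (intro continuous_at_imp_continuous_on) (auto intro: differentiable_imp_continuous_within)
  have W_meas: "W \<in> borel_measurable (lebesgue_on S)" using W_int by (rule integrable_imp_measurable)
  have integrable: "(\<lambda>x. \<psi> (W x)) integrable_on S" if "continuous_on UNIV \<psi>" for \<psi> :: "real \<Rightarrow> real"
    by (rule integrable_continuous_comp_bounded[OF that \<open>S \<in> lmeasurable\<close> W_meas W_bound])
  define \<Gamma> where "\<Gamma> t = integral S (\<lambda>x. \<phi> (c + t * W x))" for t
  have "((\<lambda>h. (\<Gamma> (0 + h) - \<Gamma> 0) / h) \<longlongrightarrow> deriv \<phi> c * integral S W) (at 0)"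
    unfolding tendsto_at_iff_sequentially comp_def
  proof (intro allI impI)
    fix X :: "nat \<Rightarrow> real" assume X: "\<forall>n. X n \<in> UNIV - {0}" and "X \<longlonglongrightarrow> 0"
    then have "Bseq X" by (intro convergent_imp_Bseq convergentI)
    then obtain T where "0 < T" and T: "\<And>n. \<bar>X n\<bar> \<le> T" unfolding Bseq_def by auto
    obtain M where "0 \<le> M" and M: "\<And>s. \<bar>s\<bar> \<le> T * B \<Longrightarrow> \<bar>\<phi> (c + s) - \<phi> c\<bar> \<le> M * \<bar>s\<bar>"
      using C1_local_lipschitz_bound[OF \<phi>_diff \<phi>_C1] by blast
    define quot where "quot n x = (\<phi> (c + X n * W x) - \<phi> c) / X n" for n x
    have quot_int: "quot n integrable_on S" for n
      unfolding quot_def using X by (intro integrable continuous_intros continuous_on_compose2[OF \<phi>_cont]) auto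
    have quot_bound: "norm (quot n x) \<le> M * B" if "x \<in> S" for n x
    proof -
      have "\<bar>X n * W x\<bar> \<le> T * B" using T[of n] W_bound[OF that] \<open>0 < T\<close> by (simp add: abs_mult mult_mono)
      from M[OF this] have "\<bar>quot n x\<bar> \<le> M * \<bar>W x\<bar>"
        using X by (simp add: quot_def abs_mult abs_divide divide_le_eq mult_ac)
      also have "\<dots> \<le> M * B" using W_bound[OF that] \<open>0 \<le> M\<close> by (rule mult_left_mono)
      finally show ?thesis by simp
    qed
    have quot_lim: "(\<lambda>n. quot n x) \<longlonglongrightarrow> deriv \<phi> c * W x" for x
    proof -
      have "((\<lambda>t. \<phi> (c + t * W x)) has_real_derivative deriv \<phi> c * W x) (at 0)"
        using \<phi>_diff by (simp add: DERIV_comp_affine_at_0)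
      then show ?thesis using X \<open>X \<longlonglongrightarrow> 0\<close>
        unfolding quot_def DERIV_def tendsto_at_iff_sequentially comp_def by simp
    qed
    have "integral S (quot n) = (\<Gamma> (0 + X n) - \<Gamma> 0) / X n" for n
      unfolding quot_def \<Gamma>_def integral_divide
      by (subst integral_diff) (auto intro!: integrable continuous_intros continuous_on_compose2[OF \<phi>_cont])
    then show "(\<lambda>n. (\<Gamma> (0 + X n) - \<Gamma> 0) / X n) \<longlonglongrightarrow> deriv \<phi> c * integral S W"
      using dominated_convergence(2)[OF quot_int integrable_on_const[OF \<open>S \<in> lmeasurable\<close>] quot_bound quot_lim]
      by (simp add: integral_mult_right)
  qed
  then show ?thesis unfolding DERIV_def \<Gamma>_def .
qed

lemma DERIV_integral_deriv_affine:
  fixes \<phi> v :: "real \<Rightarrow> real"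
  assumes \<phi>_diff: "\<forall>x. \<phi> differentiable at x" and \<phi>_C1: "continuous_on UNIV (deriv \<phi>)"
    and lip: "L-lipschitz_on {a..b} v" and "a \<le> \<alpha>" "\<alpha> \<le> \<beta>" "\<beta> \<le> b"
  shows "((\<lambda>t. integral {\<alpha><..<\<beta>} (\<lambda>x. \<phi> (r * deriv (\<lambda>x. F * x + t * v x) x)))
           has_real_derivative deriv \<phi> (r * F) * (r * (v \<beta> - v \<alpha>))) (at 0)"
proof -
  define Z where "Z = {x \<in> {a..b}. \<not> v differentiable at x}"
  define S where "S = {\<alpha><..<\<beta>} - Z"
  have "negligible Z" unfolding Z_def by (rule lipschitz_on_interval_deriv(1)[OF lip])
  have spike: "negligible {x \<in> {\<alpha>..\<beta>} - S. h x \<noteq> 0}" "negligible {x \<in> S - {\<alpha>..\<beta>}. h x \<noteq> 0}"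
    and spike_open: "negligible {x \<in> {\<alpha><..<\<beta>} - S. h x \<noteq> 0}" "negligible {x \<in> S - {\<alpha><..<\<beta>}. h x \<noteq> 0}"
    for h :: "real \<Rightarrow> real"
    using \<open>negligible Z\<close> by (auto simp: S_def intro: negligible_subset[of "Z \<union> {\<alpha>, \<beta>}"])
  have S_sub: "S \<subseteq> {a<..<b}" "\<And>x. x \<in> S \<Longrightarrow> v differentiable at x"
    using \<open>a \<le> \<alpha>\<close> \<open>\<beta> \<le> b\<close> by (auto simp: S_def Z_def)
  have "(deriv v has_integral v \<beta> - v \<alpha>) S"
    using lipschitz_on_interval_deriv(3)[OF lip assms(4-6)] has_integral_spike_set_eq[OF spike(2,1)] by simp
  then have "((\<lambda>x. r * deriv v x) has_integral r * (v \<beta> - v \<alpha>)) S" by (rule has_integral_mult_right)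
  then have "(\<lambda>x. r * deriv v x) integrable_on S" "integral S (\<lambda>x. r * deriv v x) = r * (v \<beta> - v \<alpha>)"
    by (rule has_integral_integrable, rule integral_unique)
  moreover have "\<bar>r * deriv v x\<bar> \<le> \<bar>r\<bar> * L" if "x \<in> S" for x
  proof -
    have "\<bar>deriv v x\<bar> \<le> L" using lipschitz_on_interval_deriv(2)[OF lip] S_sub that by blast
    then show ?thesis by (simp add: abs_mult mult_left_mono)
  qed
  moreover have "S \<in> lmeasurable"
  proof (rule bounded_set_imp_lmeasurable)
    show "bounded S" unfolding S_def by (rule bounded_subset[of "{\<alpha>..\<beta>}"]) auto
    show "S \<in> sets lebesgue" unfolding S_def using negligible_imp_sets[OF \<open>negligible Z\<close>] by auto
  qed
  ultimately have "((\<lambda>t. integral S (\<lambda>x. \<phi> (r * F + t * (r * deriv v x)))) has_real_derivative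
                     deriv \<phi> (r * F) * (r * (v \<beta> - v \<alpha>))) (at 0)"
    using DERIV_integral_affine_argument[OF \<phi>_diff \<phi>_C1] by metis
  moreover have "integral {\<alpha><..<\<beta>} (\<lambda>x. \<phi> (r * deriv (\<lambda>x. F * x + t * v x) x))
                 = integral S (\<lambda>x. \<phi> (r * F + t * (r * deriv v x)))" for t
  proof -
    have "deriv (\<lambda>x. F * x + t * v x) x = F + t * deriv v x" if "x \<in> S" for x
      using S_sub(2)[OF that]
      by (intro DERIV_imp_deriv) (auto intro!: derivative_eq_intros simp: DERIV_deriv_iff_real_differentiable)
    then show ?thesis
      unfolding integral_spike_set[OF spike_open] by (intro integral_cong) (simp add: algebra_simps)
  qed
  ultimately show ?thesis by simp
qed

section \<open>Gateaux derivatives of the bond contributions\<close>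

definition a_b_deriv :: "(real \<Rightarrow> real) \<Rightarrow> real \<Rightarrow> real set \<Rightarrow> (real \<Rightarrow> real) \<Rightarrow> (real \<Rightarrow> real) \<Rightarrow> real" where
  "a_b_deriv \<phi> r \<omega> y v = (if lenw \<omega> > 0 then deriv \<phi> (r / lenw \<omega> * Dw \<omega> y) * Dw \<omega> v else 0)"

lemma Dw_add_scaled: "Dw \<omega> (\<lambda>x. y x + t * v x) = Dw \<omega> y + t * Dw \<omega> v"
  unfolding Dw_def by (simp add: sum.distrib sum_distrib_left algebra_simps sum_subtractf)

lemma a_b_has_gderiv:
  assumes "\<forall>x. \<phi> differentiable at x" and "0 < r"
  shows "has_gderiv (a_b \<phi> N R i r) y v (a_b_deriv \<phi> (real r) (bond i r \<inter> Omega_a N R) y v)"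
proof -
  define \<omega> where "\<omega> = bond i r \<inter> Omega_a N R"
  show ?thesis
  proof (cases "lenw \<omega> > 0")
    case True
    define c where "c = real r / lenw \<omega> * Dw \<omega> y"
    have "a_b \<phi> N R i r (\<lambda>x. y x + t * v x) = lenw \<omega> / real r * \<phi> (c + t * (real r / lenw \<omega> * Dw \<omega> v))" for t
      using True unfolding a_b_def Let_def \<omega>_def[symmetric] Dw_add_scaled c_def by (simp add: algebra_simps)
    moreover have "((\<lambda>t. lenw \<omega> / real r * \<phi> (c + t * (real r / lenw \<omega> * Dw \<omega> v))) has_real_derivative
                     lenw \<omega> / real r * (deriv \<phi> c * (real r / lenw \<omega> * Dw \<omega> v))) (at 0)"
      using assms(1) by (intro DERIV_cmult DERIV_comp_affine_at_0) simp
    ultimately show ?thesis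
      using True \<open>0 < r\<close> unfolding has_gderiv_def a_b_deriv_def \<omega>_def[symmetric] c_def by simp
  next
    case False
    then show ?thesis unfolding has_gderiv_def a_b_def a_b_deriv_def Let_def \<omega>_def[symmetric] by simp
  qed
qed

lemma a_b_deriv_empty: "a_b_deriv \<phi> r {} y v = 0"
  unfolding a_b_deriv_def lenw_def by simp

lemma a_b_deriv_interval:
  assumes "a < b"
  shows "a_b_deriv \<phi> r {a<..<b} (\<lambda>x. F * x) v = deriv \<phi> (r * F) * (v b - v a)"
proof -
  have "components {a<..<b} = {{a<..<b}}" using assms by (simp add: components_eq_sing_iff)
  then have Dw: "Dw {a<..<b} y = y b - y a" for y using assms by (simp add: Dw_def)
  have "lenw {a<..<b} = b - a" using assms by (simp add: lenw_def)
  moreover have "r / (b - a) * (F * b - F * a) = r * F" using assms by (simp add: field_simps)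
  ultimately show ?thesis using assms by (simp add: a_b_deriv_def Dw)
qed

lemma a_b_deriv_two_intervals:
  assumes "a < b" and "b < c" and "c < d"
  shows "a_b_deriv \<phi> r ({a<..<b} \<union> {c<..<d}) (\<lambda>x. F * x) v = deriv \<phi> (r * F) * (v b - v a + (v d - v c))"
proof -
  have "{a<..<b} \<noteq> {c<..<d}" using assms by (metis greaterThanLessThan_iff less_trans order.asym dense)
  then have "components ({a<..<b} \<union> {c<..<d}) = {{a<..<b}, {c<..<d}}"
    using assms by (intro components_open_unique) (auto simp: pairwise_def disjnt_def)
  then have Dw: "Dw ({a<..<b} \<union> {c<..<d}) y = y b - y a + (y d - y c)" for y
    using assms \<open>{a<..<b} \<noteq> {c<..<d}\<close> by (simp add: Dw_def)
  have "lenw ({a<..<b} \<union> {c<..<d}) = (b - a) + (d - c)"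
    unfolding lenw_def using assms by (subst measure_Union) auto
  moreover have "r / ((b - a) + (d - c)) * (F * b - F * a + (F * d - F * c)) = r * F"
    using assms by (simp add: field_simps)
  ultimately show ?thesis using assms by (simp add: a_b_deriv_def Dw)
qed

lemma bond_split_atomistic_continuum:
  fixes s l n :: real
  assumes "0 < l" and "0 < n"
  obtains \<alpha> \<beta> where "0 \<le> \<alpha>" "\<alpha> \<le> \<beta>" "\<beta> \<le> n" "{s<..<s + l} \<inter> {0<..<n} = {\<alpha><..<\<beta>}"
    "a_b_deriv \<phi> l ({s<..<s + l} - {0..n}) (\<lambda>x. F * x) v + deriv \<phi> (l * F) * (v \<beta> - v \<alpha>)
       = deriv \<phi> (l * F) * (v (s + l) - v s)"
proof -
  consider "s + l \<le> 0 \<or> n \<le> s" | "s < 0" "0 < s + l" "s + l \<le> n" | "s < 0" "n < s + l"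
    | "0 \<le> s" "s + l \<le> n" | "0 \<le> s" "s < n" "n < s + l"
    by linarith
  then show thesis
  proof cases
    case 1
    then have "{s<..<s + l} - {0..n} = {s<..<s + l}" "{s<..<s + l} \<inter> {0<..<n} = {0<..<0}" by auto
    then show thesis using that[of 0 0] \<open>0 < l\<close> \<open>0 < n\<close> by (simp add: a_b_deriv_interval)
  next
    case 2
    have \<omega>: "{s<..<s + l} - {0..n} = {s<..<0}" using 2 by auto
    have "{s<..<s + l} \<inter> {0<..<n} = {0<..<s + l}" using 2 by auto
    moreover have "a_b_deriv \<phi> l ({s<..<s + l} - {0..n}) (\<lambda>x. F * x) v = deriv \<phi> (l * F) * (v 0 - v s)"
      unfolding \<omega> using 2 by (simp add: a_b_deriv_interval)
    ultimately show thesis using that[of 0 "s + l"] 2 by (simp add: algebra_simps)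
  next
    case 3
    have \<omega>: "{s<..<s + l} - {0..n} = {s<..<0} \<union> {n<..<s + l}" using 3 \<open>0 < n\<close> by auto
    have "{s<..<s + l} \<inter> {0<..<n} = {0<..<n}" using 3 by auto
    moreover have "a_b_deriv \<phi> l ({s<..<s + l} - {0..n}) (\<lambda>x. F * x) v
                   = deriv \<phi> (l * F) * (v 0 - v s + (v (s + l) - v n))"
      unfolding \<omega> using 3 \<open>0 < n\<close> by (simp add: a_b_deriv_two_intervals)
    ultimately show thesis using that[of 0 n] 3 \<open>0 < n\<close> by (simp add: algebra_simps)
  next
    case 4
    have \<omega>: "{s<..<s + l} - {0..n} = {}" using 4 by auto
    have "{s<..<s + l} \<inter> {0<..<n} = {s<..<s + l}" using 4 by auto
    moreover have "a_b_deriv \<phi> l ({s<..<s + l} - {0..n}) (\<lambda>x. F * x) v = 0"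
      unfolding \<omega> by (rule a_b_deriv_empty)
    ultimately show thesis using that[of s "s + l"] 4 \<open>0 < l\<close> by simp
  next
    case 5
    have \<omega>: "{s<..<s + l} - {0..n} = {n<..<s + l}" using 5 by auto
    have "{s<..<s + l} \<inter> {0<..<n} = {s<..<n}" using 5 by auto
    moreover have "a_b_deriv \<phi> l ({s<..<s + l} - {0..n}) (\<lambda>x. F * x) v = deriv \<phi> (l * F) * (v (s + l) - v n)"
      unfolding \<omega> using 5 by (simp add: a_b_deriv_interval)
    ultimately show thesis using that[of s n] 5 by (simp add: algebra_simps)
  qed
qed

lemma bond_gderivs:
  fixes \<phi> v :: "real \<Rightarrow> real"
  assumes "N \<ge> 1" and \<phi>_diff: "\<forall>x. \<phi> differentiable at x" and \<phi>_C1: "continuous_on UNIV (deriv \<phi>)"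
    and bond: "(i, r) \<in> bondset N R" and "v \<in> U N"
  shows "\<exists>A C. has_gderiv (a_b \<phi> N R i r) (\<lambda>x. F * x) v A
              \<and> has_gderiv (c_b \<phi> N i r) (\<lambda>x. F * x) v C
              \<and> has_gderiv (e_b \<phi> i r) (\<lambda>x. F * x) v
                   (deriv \<phi> (real r * F) * (v (real_of_int i + real r) - v (real_of_int i)))
              \<and> A + C = deriv \<phi> (real r * F) * (v (real_of_int i + real r) - v (real_of_int i))"
proof -
  define s where "s = real_of_int i"
  have "0 < r" and inside: "- (real N + real R) < s" "s + real r < real N + real R"
    using bond unfolding bondset_def Iset_def s_def by auto
  obtain L where lip: "L-lipschitz_on {0..real N} v" using \<open>v \<in> U N\<close> unfolding U_def by auto
  have atomistic: "bond i r \<inter> Omega_a N R = {s<..<s + real r} - {0..real N}"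
    using inside unfolding bond_def Omega_a_def s_def by auto
  have continuum: "bond i r \<inter> Omega_c N = {s<..<s + real r} \<inter> {0<..<real N}"
    unfolding bond_def Omega_c_def s_def by auto
  obtain \<alpha> \<beta> where \<alpha>\<beta>: "0 \<le> \<alpha>" "\<alpha> \<le> \<beta>" "\<beta> \<le> real N" "bond i r \<inter> Omega_c N = {\<alpha><..<\<beta>}"
    and split: "a_b_deriv \<phi> (real r) (bond i r \<inter> Omega_a N R) (\<lambda>x. F * x) v + deriv \<phi> (real r * F) * (v \<beta> - v \<alpha>)
                = deriv \<phi> (real r * F) * (v (s + real r) - v s)"
  proof -
    have "0 < real r" "0 < real N" using \<open>0 < r\<close> \<open>N \<ge> 1\<close> by auto
    from bond_split_atomistic_continuum[OF this, of s \<phi> F v] show thesis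
      using that unfolding atomistic continuum by blast
  qed
  have "has_gderiv (a_b \<phi> N R i r) (\<lambda>x. F * x) v (a_b_deriv \<phi> (real r) (bond i r \<inter> Omega_a N R) (\<lambda>x. F * x) v)"
    by (rule a_b_has_gderiv[OF \<phi>_diff \<open>0 < r\<close>])
  moreover have "has_gderiv (c_b \<phi> N i r) (\<lambda>x. F * x) v (deriv \<phi> (real r * F) * (v \<beta> - v \<alpha>))"
    using DERIV_cmult[OF DERIV_integral_deriv_affine[OF \<phi>_diff \<phi>_C1 lip \<alpha>\<beta>(1-3)], of "1 / real r" "real r" F]
      \<open>0 < r\<close> unfolding has_gderiv_def c_b_def \<alpha>\<beta>(4) by simp
  moreover have "has_gderiv (e_b \<phi> i r) (\<lambda>x. F * x) v (deriv \<phi> (real r * F) * (v (s + real r) - v s))"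
    using DERIV_comp_affine_at_0[of \<phi> "real r * F" "v (s + real r) - v s"] \<phi>_diff
    unfolding has_gderiv_def e_b_def s_def[symmetric] by (simp add: algebra_simps)
  ultimately show ?thesis using split unfolding s_def by blast
qed

lemma has_gderiv_add:
  "has_gderiv G y v D \<Longrightarrow> has_gderiv H y v D' \<Longrightarrow> has_gderiv (\<lambda>z. G z + H z) y v (D + D')"
  unfolding has_gderiv_def by (rule DERIV_add)

lemma has_gderiv_sum:
  "finite I \<Longrightarrow> (\<And>b. b \<in> I \<Longrightarrow> has_gderiv (G b) y v (D b)) \<Longrightarrow>
     has_gderiv (\<lambda>z. \<Sum>b\<in>I. G b z) y v (\<Sum>b\<in>I. D b)"
  unfolding has_gderiv_def by (rule DERIV_sum)

lemma bondset_finite: "finite (bondset N R)"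
proof (rule finite_subset)
  show "bondset N R \<subseteq> {- (int N + int R)<..<int N + int R} \<times> {1..R}"
    unfolding bondset_def Iset_def by auto
qed simp

lemma bondset_sum_telescopes:
  fixes d :: "nat \<Rightarrow> real"
  assumes "v \<in> U0 N R"
  shows "(\<Sum>(i, r)\<in>bondset N R. d r * (v (real_of_int i + real r) - v (real_of_int i))) = 0"
proof -
  \<comment> \<open>Both the sum of d r v(i + r) and the sum of d r v(i) reduce to the sum over the interior
      atoms, because v vanishes on the others and (i, r) \<mapsto> (i + r, r) is injective.\<close>
  have v0: "v (real_of_int j) = 0" if "j \<in> Iset N R" "int N \<le> \<bar>j\<bar>" for j
    using assms that unfolding U0_def ID_def Iset_def by auto
  define g where "g = (\<lambda>(j, r). d r * v (real_of_int j))"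
  define M where "M = {(j, r). 1 \<le> r \<and> r \<le> R \<and> \<bar>j\<bar> < int N}"
  define shift where "shift = (\<lambda>(i, r). (i + int r, r))"
  have "M \<subseteq> bondset N R" unfolding M_def bondset_def Iset_def by auto
  moreover have "g b = 0" if "b \<in> bondset N R - M" for b
    using that by (auto simp: g_def M_def bondset_def) (meson not_less v0)
  ultimately have sum_left: "(\<Sum>b\<in>bondset N R. g b) = (\<Sum>b\<in>M. g b)"
    by (intro sum.mono_neutral_right bondset_finite) auto
  have "M \<subseteq> shift ` bondset N R"
  proof
    fix b assume "b \<in> M"
    then obtain j r where b: "b = (j, r)" "1 \<le> r" "r \<le> R" "\<bar>j\<bar> < int N" unfolding M_def by auto
    then have "(j - int r, r) \<in> bondset N R" unfolding bondset_def Iset_def by auto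
    moreover have "b = shift (j - int r, r)" using b by (simp add: shift_def)
    ultimately show "b \<in> shift ` bondset N R" by blast
  qed
  moreover have "g b = 0" if "b \<in> shift ` bondset N R - M" for b
    using that by (auto simp: g_def M_def bondset_def shift_def) (metis not_less v0 of_int_add of_int_of_nat_eq)
  ultimately have "(\<Sum>b\<in>shift ` bondset N R. g b) = (\<Sum>b\<in>M. g b)"
    by (intro sum.mono_neutral_right finite_imageI bondset_finite) auto
  moreover have "inj_on shift (bondset N R)" unfolding shift_def inj_on_def by auto
  ultimately have sum_right: "(\<Sum>b\<in>bondset N R. g (shift b)) = (\<Sum>b\<in>M. g b)"
    by (simp add: sum.reindex)
  have "(\<Sum>(i, r)\<in>bondset N R. d r * (v (real_of_int i + real r) - v (real_of_int i)))
        = (\<Sum>b\<in>bondset N R. g (shift b)) - (\<Sum>b\<in>bondset N R. g b)"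
    unfolding g_def shift_def by (simp add: right_diff_distrib sum_subtractf case_prod_beta)
  then show ?thesis using sum_left sum_right by simp
qed

theorem mainTheorem5:
  fixes N R :: nat and \<phi> :: "real \<Rightarrow> real" and F :: real
  assumes "N \<ge> 1" and "R \<ge> 1"
    and "\<forall>x. \<phi> differentiable at x" and "continuous_on UNIV (deriv \<phi>)"
    and "F > 0"
  shows "(\<forall>v \<in> U0 N R. has_gderiv (E_acc \<phi> N R) (\<lambda>x. F * x) v 0)
       \<and> (\<forall>(i, r) \<in> bondset N R. \<forall>v \<in> U N.
           \<exists>A C. has_gderiv (a_b \<phi> N R i r) (\<lambda>x. F * x) v A
                \<and> has_gderiv (c_b \<phi> N i r) (\<lambda>x. F * x) v C
                \<and> has_gderiv (e_b \<phi> i r) (\<lambda>x. F * x) v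
                     (deriv \<phi> (real r * F) * (v (real_of_int i + real r) - v (real_of_int i)))
                \<and> A + C = deriv \<phi> (real r * F) * (v (real_of_int i + real r) - v (real_of_int i)))"
proof (intro conjI)
  show "\<forall>v \<in> U0 N R. has_gderiv (E_acc \<phi> N R) (\<lambda>x. F * x) v 0"
  proof
    fix v assume "v \<in> U0 N R"
    then have "v \<in> U N" by (simp add: U0_def)
    have "has_gderiv (\<lambda>y. a_b \<phi> N R i r y + c_b \<phi> N i r y) (\<lambda>x. F * x) v
            (deriv \<phi> (real r * F) * (v (real_of_int i + real r) - v (real_of_int i)))"
      if bond: "(i, r) \<in> bondset N R" for i r
    proof -
      obtain A C where "has_gderiv (a_b \<phi> N R i r) (\<lambda>x. F * x) v A" "has_gderiv (c_b \<phi> N i r) (\<lambda>x. F * x) v C"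
        and "A + C = deriv \<phi> (real r * F) * (v (real_of_int i + real r) - v (real_of_int i))"
        using bond_gderivs[OF assms(1,3,4) bond \<open>v \<in> U N\<close>, where F = F] by blast
      from has_gderiv_add[OF this(1,2)] this(3) show ?thesis by simp
    qed
    then have "has_gderiv (\<lambda>y. \<Sum>(i, r)\<in>bondset N R. a_b \<phi> N R i r y + c_b \<phi> N i r y) (\<lambda>x. F * x) v
            (\<Sum>(i, r)\<in>bondset N R. deriv \<phi> (real r * F) * (v (real_of_int i + real r) - v (real_of_int i)))"
      by (intro has_gderiv_sum bondset_finite) auto
    then show "has_gderiv (E_acc \<phi> N R) (\<lambda>x. F * x) v 0"
      unfolding bondset_sum_telescopes[OF \<open>v \<in> U0 N R\<close>] E_acc_def sum.distrib[symmetric]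
      by (simp add: case_prod_beta)
  qed
qed (use bond_gderivs[OF assms(1,3,4)] in blast)

end
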